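(* As a polynomial in $D$, \[ L(u)=\sum_{i=n+2}^{N}(-1)^iT^{(N-i)}_1\Bigl(u+\frac i2\Bigr)D^i-\sum_{i=0}^n(-1)^iT^{(i)}_1\Bigl(u+\frac i2\Bigr)D^i , \] where $T^{(0)}_1(u)=1$ (in particular the coefficient of $D^{n+1}$ is $0$). Equivalently, with the extension of $T^{(a)}_1$ to all $a\in\mathbb Z$ described below, $L(u)=-\sum_{i=0}^N(-1)^iT^{(i)}_1(u+\frac i2)D^i$.
   Context: Fix an integer $n\ge 2$ and put $N=2n+2$. Let $Q_a(u)$ ($1\le a\le n$, $u\in\mathbb C$) be algebraically independent commuting indeterminates, $\mathcal K$ the field of fractions of $\mathbb Z[Q_a(u)^{\pm1}]$. Put $d_a=1+\delta_{an}$, $Y_a(u)=Q_a(u-\frac{d_a}{2})/Q_a(u+\frac{d_a}{2})$ for $1\le a\le n$, $Y_0(u)=1$. Let $J=\{1\prec2\prec\cdots\prec n\prec\bar n\prec\cdots\prec\bar2\prec\bar1\}$. For $1\le a\le n$ set $z_a(u)=\frac{Y_a(u+\frac a2)}{Y_{a-1}(u+\frac{a+1}2)}$, $z_{\bar a}(u)=\frac{Y_{a-1}(u+\frac{2n-a+3}2)}{Y_a(u+\frac{2n-a+4}2)}$; set $x_a(u)=z_a(u)$, $x_{2n+3-a}(u)=z_{\bar a}(u)$ for $1\le a\le n$, and $x_{n+1}(u)=-x_{n+2}(u)=\frac{Q_n(u+\frac n2)Q_n(u+\frac{n+4}2)}{Q_n(u+\frac{n+2}2)^2}$. $D$ is the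 shift operator: difference operators $\sum_jc_j(u)D^j$ ($c_j(u)\in\mathcal K$) are multiplied using $D\,c(u)=c(u+1)D$. Define $L(u)=(x_1(u+n)-D)(x_2(u+n-1)-D)\cdots(x_N(u+n+1-N)-D)$ (factors in order $i=1,\dots,N$ from left to right, the $i$-th being $x_i(u+n+1-i)-D$). For $1\le a\le n$ define $T^{(a)}_1(u)$ by $T^{(a)}_1(u+\frac12)=\sum z_{i_1}(u+\frac{a-1}2)z_{i_2}(u+\frac{a-3}2)\cdots z_{i_a}(u-\frac{a-1}2)$, the sum over $(i_1,\dots,i_a)\in J^a$ with $i_1\prec\cdots\prec i_a$ such that whenever $i_k=c$, $i_l=\bar c$ for some $1\le c\le n$, one has $n+k-l\ge c$. Set $T^{(0)}_1(u)=1$, $T^{(a)}_1(u)=0$ for $a<0$, $T^{(n+1)}_1(u)=0$, and $T^{(a)}_1(u)=-T^{(N-a)}_1(u)$ for $a\ge n+2$ (so $T^{(N)}_1=-1$ and $T^{(a)}_1=0$ for $a>N$). *)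

theory Defs
  imports Complex_Main
begin

text \<open>Setting: n is the rank, N = 2n+2.  The indeterminates Q_a(u) (1 <= a <= n, u complex)
  take values in an arbitrary field 'k and are assumed nonzero.  All quantities involved
  (Y, z, x, T, coefficients of L) are Laurent monomials/polynomials in the Q's with integer
  coefficients, so an identity in the fraction field of Z[Q^{+-1}] is the same as an identity
  valid for every nonzero specialization into every field.\<close>

definition dA :: "nat \<Rightarrow> nat \<Rightarrow> complex" where
  "dA n a = (if a = n then 2 else 1)"

definition Ycal :: "nat \<Rightarrow> (nat \<Rightarrow> complex \<Rightarrow> 'k::field) \<Rightarrow> nat \<Rightarrow> complex \<Rightarrow> 'k" where
  "Ycal n Q a u = (if a = 0 then 1 else Q a (u - dA n a / 2) / Q a (u + dA n a / 2))"

definition zp :: "nat \<Rightarrow> (nat \<Rightarrow> complex \<Rightarrow> 'k::field) \<Rightarrow> nat \<Rightarrow> complex \<Rightarrow> 'k" where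
  "zp n Q a u = Ycal n Q a (u + of_nat a / 2) / Ycal n Q (a - 1) (u + (of_nat a + 1) / 2)"

definition zb :: "nat \<Rightarrow> (nat \<Rightarrow> complex \<Rightarrow> 'k::field) \<Rightarrow> nat \<Rightarrow> complex \<Rightarrow> 'k" where
  "zb n Q a u = Ycal n Q (a - 1) (u + (2 * of_nat n - of_nat a + 3) / 2)
              / Ycal n Q a (u + (2 * of_nat n - of_nat a + 4) / 2)"

text \<open>The alphabet J = {1 < ... < n < bar n < ... < bar 1} is encoded as {1..2n}:
  j <= n encodes j, and j > n encodes bar (2n+1-j); the order is the order on nat.\<close>
definition zJ :: "nat \<Rightarrow> (nat \<Rightarrow> complex \<Rightarrow> 'k::field) \<Rightarrow> nat \<Rightarrow> complex \<Rightarrow> 'k" where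
  "zJ n Q j u = (if j \<le> n then zp n Q j u else zb n Q (2 * n + 1 - j) u)"

definition Xmid :: "nat \<Rightarrow> (nat \<Rightarrow> complex \<Rightarrow> 'k::field) \<Rightarrow> complex \<Rightarrow> 'k" where
  "Xmid n Q u = Q n (u + of_nat n / 2) * Q n (u + (of_nat n + 4) / 2) / (Q n (u + (of_nat n + 2) / 2))^2"

definition xN :: "nat \<Rightarrow> (nat \<Rightarrow> complex \<Rightarrow> 'k::field) \<Rightarrow> nat \<Rightarrow> complex \<Rightarrow> 'k" where
  "xN n Q i u = (if i \<le> n then zp n Q i u
                 else if i = n + 1 then Xmid n Q u
                 else if i = n + 2 then - Xmid n Q u
                 else zb n Q (2 * n + 3 - i) u)"

text \<open>Admissible tuples (i_1 < ... < i_a) in J^a (0-indexed positions in the list;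
  the condition n + k - l >= c only involves the difference of positions).\<close>
definition admissible :: "nat \<Rightarrow> nat list \<Rightarrow> bool" where
  "admissible n xs \<longleftrightarrow> sorted_wrt (<) xs \<and> set xs \<subseteq> {1..2 * n} \<and>
     (\<forall>k < length xs. \<forall>l < length xs. \<forall>c. 1 \<le> c \<and> c \<le> n \<and> xs ! k = c \<and> xs ! l = 2 * n + 1 - c
        \<longrightarrow> int n + int k - int l \<ge> int c)"

text \<open>T^{(a)}_1(u) for 0 <= a <= n, obtained from the defining formula for T^{(a)}_1(u+1/2)
  by replacing u with u - 1/2: the k-th factor (k = 1..a) is evaluated at
  u - 1/2 + (a-1)/2 - (k-1) = u + a/2 - k.\<close>
definition T1 :: "nat \<Rightarrow> (nat \<Rightarrow> complex \<Rightarrow> 'k::field) \<Rightarrow> nat \<Rightarrow> complex \<Rightarrow> 'k" where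
  "T1 n Q a u = (if a = 0 then 1 else
     (\<Sum>xs \<in> {xs. length xs = a \<and> admissible n xs}.
        \<Prod>k < a. zJ n Q (xs ! k) (u + of_nat a / 2 - of_nat (k + 1))))"

text \<open>Difference operators sum_j c_j(u) D^j: represented by the coefficient function
  (j, u) |-> c_j(u).  Multiplication uses D c(u) = c(u+1) D.\<close>
type_synonym 'k dop = "nat \<Rightarrow> complex \<Rightarrow> 'k"

definition dop_mult :: "'k::field dop \<Rightarrow> 'k dop \<Rightarrow> 'k dop" where
  "dop_mult A B = (\<lambda>k u. \<Sum>i\<le>k. A i u * B (k - i) (u + of_nat i))"

definition dop_one :: "'k::field dop" where
  "dop_one = (\<lambda>k u. if k = 0 then 1 else 0)"

definition dop_lin :: "(complex \<Rightarrow> 'k::field) \<Rightarrow> 'k dop" where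
  "dop_lin f = (\<lambda>k u. if k = 0 then f u else if k = 1 then -1 else 0)"

definition Lop :: "nat \<Rightarrow> (nat \<Rightarrow> complex \<Rightarrow> 'k::field) \<Rightarrow> 'k dop" where
  "Lop n Q = foldr dop_mult
     (map (\<lambda>i. dop_lin (\<lambda>v. xN n Q i (v + of_int (int n + 1 - int i)))) [1..<2 * n + 3])
     dop_one"

end

theory Submission
  imports Defs
begin

text \<open>Let \<open>L\<^sub>r\<close> be the product of the factors \<open>r + 1, \<dots>, 2n + 2 - r\<close> of \<open>L(u)\<close>, so that
  \<open>L\<^sub>0 = L\<close>, \<open>L\<^sub>n\<^sub>+\<^sub>1 = 1\<close> and \<open>L\<^sub>r\<close> is \<open>L\<^sub>r\<^sub>+\<^sub>1\<close> multiplied by one first-order factor on each side.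

  On the combinatorial side, an admissible word in the letters \<open>r + 1, \<dots>, (r + 1)\<^bsub>bar\<^esub>\<close> is an
  admissible word in the letters \<open>r + 2, \<dots>, (r + 2)\<^bsub>bar\<^esub>\<close>, possibly preceded by \<open>r + 1\<close> and/or
  followed by \<open>(r + 1)\<^bsub>bar\<^esub>\<close>, and both only if it is short enough. This gives a four-term recursion
  for the sums over such words and shows that they vanish beyond length \<open>n - r\<close>. Extended to all
  degrees by the reflection \<open>T\<^sup>(\<^sup>a\<^sup>) = - T\<^sup>(\<^sup>N\<^sup>-\<^sup>a\<^sup>)\<close>, the sums satisfy the same recursion without
  the length restriction, because \<open>z\<^sub>r\<^sub>+\<^sub>1\<close> and \<open>z\<^bsub>bar\<^esub>\<^sub>r\<^sub>+\<^sub>1\<close> are ratios of shifted \<open>Y\<close>'s that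
  telescope across the reflection. This recursion is exactly what multiplication by the two outer
  factors does to the coefficients, so induction on \<open>n - r\<close>, starting from the two middle factors
  where \<open>x\<^sub>n\<^sub>+\<^sub>1(u) x\<^sub>n\<^sub>+\<^sub>1(u - 1)\<close> is again a ratio of \<open>Y\<^sub>n\<close>'s, determines the coefficients of
  every \<open>L\<^sub>r\<close>.\<close>

section \<open>Difference operators\<close>

lemma dop_mult_assoc:
  fixes A B C :: "'k::field dop"
  shows "dop_mult (dop_mult A B) C = dop_mult A (dop_mult B C)"
proof (intro ext)
  fix k u
  define g where "g = (\<lambda>i j. A i u * B j (u + of_nat i) * C (k - i - j) (u + of_nat i + of_nat j))"
  have "dop_mult (dop_mult A B) C k u = (\<Sum>s\<le>k. \<Sum>i\<le>s. g i (s - i))"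
    unfolding dop_mult_def g_def
    by (auto simp: sum_distrib_right add.assoc intro!: sum.cong)
  also have "\<dots> = (\<Sum>(i, j)\<in>{(i, j). i + j \<le> k}. g i j)"
    by (rule sum.triangle_reindex_eq[symmetric])
  also have "{(i, j). i + j \<le> k} = Sigma {..k} (\<lambda>i. {..k - i})"
    by auto
  also have "(\<Sum>(i, j)\<in>Sigma {..k} (\<lambda>i. {..k - i}). g i j) = (\<Sum>i\<le>k. \<Sum>j\<le>k - i. g i j)"
    by (rule sum.Sigma[symmetric]) auto
  also have "\<dots> = dop_mult A (dop_mult B C) k u"
    unfolding dop_mult_def g_def
    by (auto simp: sum_distrib_left mult.assoc add.assoc diff_diff_add intro!: sum.cong)
  finally show "dop_mult (dop_mult A B) C k u = dop_mult A (dop_mult B C) k u" .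
qed

lemma dop_mult_one_left [simp]: "dop_mult dop_one A = (A :: 'k::field dop)"
  by (intro ext) (simp add: dop_mult_def dop_one_def sum.atMost_shift)

lemma dop_mult_one_right [simp]: "dop_mult A dop_one = (A :: 'k::field dop)"
proof (intro ext)
  fix k u
  have "dop_mult A dop_one k u = (\<Sum>i\<le>k. if i = k then A i u else 0)"
    unfolding dop_mult_def dop_one_def by (intro sum.cong) auto
  then show "dop_mult A dop_one k u = A k u"
    by simp
qed

lemma foldr_dop_mult:
  "foldr dop_mult As (B :: 'k::field dop) = dop_mult (foldr dop_mult As dop_one) B"
  by (induction As) (simp_all add: dop_mult_assoc)

text \<open>Coefficients extended by zero to negative powers of the shift, so that the
  coefficient formulas for multiplication by a first-order factor hold without case distinctions.\<close>
definition dop_coeff :: "'k::field dop \<Rightarrow> int \<Rightarrow> complex \<Rightarrow> 'k" where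
  "dop_coeff A i u = (if i < 0 then 0 else A (nat i) u)"

lemma dop_coeff_lin: "dop_coeff (dop_lin f) i u = (if i = 0 then f u else if i = 1 then -1 else 0)"
  by (simp add: dop_coeff_def dop_lin_def nat_eq_iff)

lemma dop_coeff_lin_mult:
  "dop_coeff (dop_mult (dop_lin f) C) i u = f u * dop_coeff C i u - dop_coeff C (i - 1) (u + 1)"
proof (cases "i < 0")
  case False
  have "dop_mult (dop_lin f) C (nat i) u
      = (\<Sum>j\<le>nat i. (if j = 0 then f u * C (nat i) u else 0)
                   + (if j = 1 then - C (nat i - 1) (u + 1) else 0))"
    unfolding dop_mult_def dop_lin_def by (intro sum.cong) auto
  then show ?thesis
    using False by (auto simp: dop_coeff_def sum.distrib nat_diff_distrib)
qed (simp add: dop_coeff_def)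

lemma dop_coeff_mult_lin:
  "dop_coeff (dop_mult C (dop_lin g)) i u
    = dop_coeff C i u * g (u + of_int i) - dop_coeff C (i - 1) u"
proof (cases "i < 0")
  case False
  have "dop_mult C (dop_lin g) (nat i) u
      = (\<Sum>j\<le>nat i. (if j = nat i then C (nat i) u * g (u + of_int i) else 0)
                   + (if Suc j = nat i then - C j u else 0))"
    unfolding dop_mult_def dop_lin_def using False by (intro sum.cong) auto
  then show ?thesis
    using False by (cases "nat i") (auto simp: dop_coeff_def sum.distrib nat_diff_distrib)
qed (simp add: dop_coeff_def)

lemma minus_one_powi_diff:
  shows "(-1::'k::field) powi (i - 1) = - ((-1) powi i)"
    and "(-1::'k::field) powi (i - 2) = (-1) powi i"
  by (simp_all add: power_int_diff)

section \<open>Letters as ratios of shifted Y's\<close>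

definition Ysh :: "nat \<Rightarrow> (nat \<Rightarrow> complex \<Rightarrow> 'k::field) \<Rightarrow> nat \<Rightarrow> complex \<Rightarrow> 'k" where
  "Ysh n Q a u = Ycal n Q a (u + of_nat a / 2)"

lemma Ysh_0 [simp]: "Ysh n Q 0 u = 1"
  by (simp add: Ysh_def Ycal_def)

lemma Ysh_nonzero:
  assumes "\<And>a v. 1 \<le> a \<Longrightarrow> a \<le> n \<Longrightarrow> Q a v \<noteq> 0" and "a \<le> n"
  shows "Ysh n Q a u \<noteq> 0"
  using assms by (cases "a = 0") (auto simp: Ysh_def Ycal_def)

lemma zp_eq_Ysh:
  assumes "1 \<le> a"
  shows "zp n Q a u = Ysh n Q a u / Ysh n Q (a - 1) (u + 1)"
proof -
  have "u + 1 + of_nat (a - 1) / 2 = u + (of_nat a + 1) / (2::complex)"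
    using assms by (simp add: of_nat_diff field_simps)
  then show ?thesis
    unfolding zp_def Ysh_def by (simp only:)
qed

lemma zb_eq_Ysh:
  assumes "1 \<le> a" and "a \<le> n"
  shows "zb n Q a u = Ysh n Q (a - 1) (u + of_nat (n - a + 2)) / Ysh n Q a (u + of_nat (n - a + 2))"
proof -
  have "u + of_nat (n - a + 2) + of_nat (a - 1) / 2
      = u + (2 * of_nat n - of_nat a + 3) / (2::complex)"
    and "u + of_nat (n - a + 2) + of_nat a / 2 = u + (2 * of_nat n - of_nat a + 4) / (2::complex)"
    using assms by (simp_all add: of_nat_diff field_simps)
  then show ?thesis
    unfolding zb_def Ysh_def by (simp only:)
qed

lemma zp_zb_eq_Ysh:
  assumes "r < n"
  shows "zp n Q (r + 1) (w - 1) = Ysh n Q (r + 1) (w - 1) / Ysh n Q r w"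
    and "zb n Q (r + 1) w
      = Ysh n Q r (w + of_int (int (n - r) + 1)) / Ysh n Q (r + 1) (w + of_int (int (n - r) + 1))"
proof -
  show "zp n Q (r + 1) (w - 1) = Ysh n Q (r + 1) (w - 1) / Ysh n Q r w"
    using zp_eq_Ysh[of "r + 1" n Q "w - 1"] by simp
  have shift: "(of_nat (n - (r + 1) + 2) :: complex) = of_int (int (n - r) + 1)"
    using assms by (simp add: of_nat_diff)
  have "zb n Q (r + 1) w = Ysh n Q (r + 1 - 1) (w + of_nat (n - (r + 1) + 2))
      / Ysh n Q (r + 1) (w + of_nat (n - (r + 1) + 2))"
    using assms by (intro zb_eq_Ysh) auto
  then show "zb n Q (r + 1) w
      = Ysh n Q r (w + of_int (int (n - r) + 1)) / Ysh n Q (r + 1) (w + of_int (int (n - r) + 1))"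
    unfolding shift by simp
qed

lemma zJ_outer:
  assumes "r < n"
  shows "zJ n Q (r + 1) = zp n Q (r + 1)" and "zJ n Q (2 * n - r) = zb n Q (r + 1)"
  using assms by (auto simp: zJ_def fun_eq_iff)

lemma Xmid_mult_shift:
  assumes "\<And>a v. 1 \<le> a \<Longrightarrow> a \<le> n \<Longrightarrow> Q a v \<noteq> 0" and "1 \<le> n"
  shows "Xmid n Q u * Xmid n Q (u - 1) = Ysh n Q n u / Ysh n Q n (u + 1)"
proof -
  define q where "q t = Q n (u + of_nat n / 2 + t)" for t
  have q_nonzero: "q t \<noteq> 0" for t
    using assms by (simp add: q_def)
  have X0: "Xmid n Q u = q 0 * q 2 / (q 1)\<^sup>2"
    by (simp add: Xmid_def q_def field_simps add.commute add.left_commute)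
  have X1: "Xmid n Q (u - 1) = q (-1) * q 1 / (q 0)\<^sup>2"
    by (simp add: Xmid_def q_def field_simps add.commute add.left_commute)
  have Y0: "Ysh n Q n u = q (-1) / q 1"
    using assms(2)
    by (simp add: Ysh_def Ycal_def dA_def q_def diff_divide_distrib add.commute add.left_commute)
       (simp add: algebra_simps)
  have Y1: "Ysh n Q n (u + 1) = q 0 / q 2"
    using assms(2) by (simp add: Ysh_def Ycal_def dA_def q_def add.commute add.left_commute)
  show ?thesis
    unfolding X0 X1 Y0 Y1 using q_nonzero by (simp add: field_simps power2_eq_square)
qed

section \<open>Admissibility\<close>

lemma sorted_wrt_less_nth_less_iff:
  fixes xs :: "'a::linorder list"
  assumes "sorted_wrt (<) xs" and "i < length xs" and "j < length xs"
  shows "xs ! i < xs ! j \<longleftrightarrow> i < j"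
  using assms by (metis linorder_neq_iff order.asym sorted_wrt_nth_less)

lemma card_sorted_wrt_between:
  fixes xs :: "'a::linorder list"
  assumes sorted: "sorted_wrt (<) xs" and "k \<le> l" and "l < length xs"
  shows "card {x \<in> set xs. xs ! k \<le> x \<and> x < xs ! l} = l - k"
proof -
  have "{x \<in> set xs. xs ! k \<le> x \<and> x < xs ! l} = (!) xs ` {k..<l}"
  proof (intro equalityI subsetI)
    fix x assume "x \<in> {x \<in> set xs. xs ! k \<le> x \<and> x < xs ! l}"
    then obtain i where "i < length xs" "x = xs ! i" "xs ! k \<le> xs ! i" "xs ! i < xs ! l"
      by (auto simp: in_set_conv_nth)
    then show "x \<in> (!) xs ` {k..<l}"
      using assms sorted_wrt_less_nth_less_iff[OF sorted] by (force simp: not_less[symmetric])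
  qed (use assms sorted_wrt_less_nth_less_iff[OF sorted] in \<open>force simp: le_less\<close>)
  moreover have "inj_on ((!) xs) {k..<l}"
    using assms by (intro inj_on_nth) (auto simp: strict_sorted_iff)
  ultimately show ?thesis
    by (simp add: card_image)
qed

text \<open>For a strictly increasing word the distance \<open>l - k\<close> between the positions of \<open>c\<close>
  and \<open>c\<^bsub>bar\<^esub>\<close> is the number of its letters in \<open>[c, c\<^bsub>bar\<^esub>)\<close>, so admissibility only depends
  on the set of letters.\<close>
definition pair_ok :: "nat \<Rightarrow> nat set \<Rightarrow> nat \<Rightarrow> bool" where
  "pair_ok n S c \<longleftrightarrow>
     (c \<in> S \<longrightarrow> 2 * n + 1 - c \<in> S \<longrightarrow> card {x \<in> S. c \<le> x \<and> x < 2 * n + 1 - c} + c \<le> n)"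

definition admissible_set :: "nat \<Rightarrow> nat set \<Rightarrow> bool" where
  "admissible_set n S \<longleftrightarrow> S \<subseteq> {1..2 * n} \<and> (\<forall>c\<in>{1..n}. pair_ok n S c)"

lemma admissible_iff_admissible_set:
  "admissible n xs \<longleftrightarrow> sorted_wrt (<) xs \<and> admissible_set n (set xs)"
proof (cases "sorted_wrt (<) xs")
  case sorted: True
  have "int n + int k - int l \<ge> int c \<longleftrightarrow> card {x \<in> set xs. c \<le> x \<and> x < 2 * n + 1 - c} + c \<le> n"
    if "k < length xs" "l < length xs" "c \<in> {1..n}" "xs ! k = c" "xs ! l = 2 * n + 1 - c" for k l c
  proof -
    have "k < l"
      using that sorted_wrt_less_nth_less_iff[OF sorted, of k l] by auto
    then show ?thesis
      using that card_sorted_wrt_between[OF sorted, of k l] by auto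
  qed
  then show ?thesis
    using sorted unfolding admissible_def admissible_set_def pair_ok_def
    by (auto simp: in_set_conv_nth)
qed (simp add: admissible_def)

lemma pair_ok_Un_outer:
  assumes "a \<le> n" "S \<subseteq> {a + 1..2 * n - a}" "X \<subseteq> {a, 2 * n + 1 - a}" "c \<in> {1..n}" "c \<noteq> a"
  shows "pair_ok n (X \<union> S) c \<longleftrightarrow> pair_ok n S c"
proof -
  have inner: "a < y \<and> y < 2 * n + 1 - a" if "y \<in> S" for y
    using assms(2) that by force
  have "c \<notin> X" "2 * n + 1 - c \<notin> X"
    using assms(1,3-5) by auto
  then show ?thesis
  proof (cases "c \<in> S \<and> 2 * n + 1 - c \<in> S")
    case True
    then have "{y \<in> X \<union> S. c \<le> y \<and> y < 2 * n + 1 - c} = {y \<in> S. c \<le> y \<and> y < 2 * n + 1 - c}"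
      using assms(3) inner by fastforce
    then show ?thesis
      using True by (simp add: pair_ok_def)
  next
    case False
    with \<open>c \<notin> X\<close> \<open>2 * n + 1 - c \<notin> X\<close> have "\<not> (c \<in> X \<union> S \<and> 2 * n + 1 - c \<in> X \<union> S)"
      by blast
    then show ?thesis
      using False by (auto simp: pair_ok_def)
  qed
qed

lemma admissible_set_insert_outer:
  assumes "1 \<le> a" "a \<le> n" "S \<subseteq> {a + 1..2 * n - a}" "x = a \<or> x = 2 * n + 1 - a"
  shows "admissible_set n (insert x S) \<longleftrightarrow> admissible_set n S"
proof -
  have "pair_ok n ({x} \<union> S) c \<longleftrightarrow> pair_ok n S c" if "c \<in> {1..n}" for c
  proof (cases "c = a")
    case True
    have "a \<notin> S" "2 * n + 1 - a \<notin> S"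
      using assms(3) by force+
    then show ?thesis
      using True assms by (auto simp: pair_ok_def)
  qed (use assms that in \<open>intro pair_ok_Un_outer\<close>, auto)
  moreover have "insert x S \<subseteq> {1..2 * n} \<longleftrightarrow> S \<subseteq> {1..2 * n}"
    using assms by auto
  ultimately show ?thesis
    unfolding admissible_set_def by auto
qed

lemma admissible_set_insert_pair:
  assumes "1 \<le> a" "a \<le> n" "S \<subseteq> {a + 1..2 * n - a}"
  shows "admissible_set n (insert a (insert (2 * n + 1 - a) S)) \<longleftrightarrow>
    admissible_set n S \<and> card S + a + 1 \<le> n"
proof -
  let ?T = "{a, 2 * n + 1 - a} \<union> S"
  have inner: "a < y \<and> y < 2 * n + 1 - a" if "y \<in> S" for y
    using assms(3) that by force
  have "pair_ok n ?T c \<longleftrightarrow> pair_ok n S c" if "c \<in> {1..n}" "c \<noteq> a" for c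
    using assms that by (intro pair_ok_Un_outer) auto
  moreover have "pair_ok n S a"
    using inner by (auto simp: pair_ok_def)
  moreover have "pair_ok n ?T a \<longleftrightarrow> card S + a + 1 \<le> n"
  proof -
    have "{y \<in> ?T. a \<le> y \<and> y < 2 * n + 1 - a} = insert a S"
      using assms inner by fastforce
    moreover have "finite S" "a \<notin> S"
      using assms(3) finite_subset inner by auto
    ultimately show ?thesis
      by (simp add: pair_ok_def)
  qed
  moreover have "?T \<subseteq> {1..2 * n} \<longleftrightarrow> S \<subseteq> {1..2 * n}" "a \<in> {1..n}"
    using assms by auto
  ultimately show ?thesis
    unfolding admissible_set_def by (metis insert_is_Un Un_insert_left)
qed

lemma admissible_Cons_iff:
  assumes "1 \<le> a" "a \<le> n" "set ys \<subseteq> {a + 1..2 * n - a}"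
  shows "admissible n (a # ys) \<longleftrightarrow> admissible n ys"
proof -
  have "sorted_wrt (<) (a # ys) \<longleftrightarrow> sorted_wrt (<) ys"
    using assms(3) by force
  then show ?thesis
    using admissible_set_insert_outer[OF assms] by (simp add: admissible_iff_admissible_set)
qed

lemma admissible_snoc_iff:
  assumes "1 \<le> a" "a \<le> n" "set ys \<subseteq> {a + 1..2 * n - a}"
  shows "admissible n (ys @ [2 * n + 1 - a]) \<longleftrightarrow> admissible n ys"
proof -
  have "sorted_wrt (<) (ys @ [2 * n + 1 - a]) \<longleftrightarrow> sorted_wrt (<) ys"
    using assms(3) by (force simp: sorted_wrt_append)
  then show ?thesis
    using admissible_set_insert_outer[OF assms] by (simp add: admissible_iff_admissible_set)
qed

lemma admissible_Cons_snoc_iff: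
  assumes "1 \<le> a" "a \<le> n" "set ys \<subseteq> {a + 1..2 * n - a}"
  shows "admissible n (a # ys @ [2 * n + 1 - a]) \<longleftrightarrow> admissible n ys \<and> length ys + a + 1 \<le> n"
proof -
  have "sorted_wrt (<) (a # ys @ [2 * n + 1 - a]) \<longleftrightarrow> sorted_wrt (<) ys"
    using assms by (force simp: sorted_wrt_append)
  moreover have "card (set ys) = length ys" if "sorted_wrt (<) ys"
    using that by (simp add: strict_sorted_iff distinct_card)
  ultimately show ?thesis
    using admissible_set_insert_pair[OF assms]
    by (auto simp: admissible_iff_admissible_set insert_commute)
qed

section \<open>Sums over admissible words\<close>

text \<open>The letter in position \<open>k\<close> (counted from \<open>0\<close>) is evaluated at \<open>w - (k + 1)\<close>.\<close>
fun word_weight :: "nat \<Rightarrow> (nat \<Rightarrow> complex \<Rightarrow> 'k::field) \<Rightarrow> nat list \<Rightarrow> complex \<Rightarrow> 'k" where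
  "word_weight n Q [] w = 1"
| "word_weight n Q (x # xs) w = zJ n Q x (w - 1) * word_weight n Q xs (w - 1)"

lemma word_weight_eq_prod:
  "word_weight n Q xs w = (\<Prod>k<length xs. zJ n Q (xs ! k) (w - of_nat (k + 1)))"
  by (induction xs arbitrary: w)
     (simp_all add: prod.lessThan_Suc_shift algebra_simps del: prod.lessThan_Suc)

lemma word_weight_snoc:
  "word_weight n Q (xs @ [y]) w = word_weight n Q xs w * zJ n Q y (w - of_nat (length xs + 1))"
  by (induction xs arbitrary: w) (simp_all add: algebra_simps)

text \<open>Admissible words in the letters \<open>r + 1 \<prec> \<dots> \<prec> n \<prec> n\<^bsub>bar\<^esub> \<prec> \<dots> \<prec> (r + 1)\<^bsub>bar\<^esub>\<close>; the length
  is an integer so that negative lengths give no words.\<close>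
definition adm_words :: "nat \<Rightarrow> nat \<Rightarrow> int \<Rightarrow> nat list set" where
  "adm_words n r m = {xs. int (length xs) = m \<and> admissible n xs \<and> set xs \<subseteq> {r + 1..2 * n - r}}"

definition adm_sum :: "nat \<Rightarrow> (nat \<Rightarrow> complex \<Rightarrow> 'k::field) \<Rightarrow> nat \<Rightarrow> int \<Rightarrow> complex \<Rightarrow> 'k" where
  "adm_sum n Q r m w = (\<Sum>xs\<in>adm_words n r m. word_weight n Q xs w)"

lemma finite_adm_words: "finite (adm_words n r m)"
proof (rule finite_subset)
  show "adm_words n r m \<subseteq> {xs. set xs \<subseteq> {r + 1..2 * n - r} \<and> length xs = nat m}"
    by (auto simp: adm_words_def)
qed (rule finite_lists_length_eq, simp)

lemma T1_eq_adm_sum: "T1 n Q a u = adm_sum n Q 0 (int a) (u + of_nat a / 2)"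
proof (cases "a = 0")
  case True
  have "adm_words n 0 0 = {[]}"
    by (auto simp: adm_words_def admissible_def)
  then show ?thesis
    by (simp add: True T1_def adm_sum_def)
next
  case False
  have "adm_words n 0 (int a) = {xs. length xs = a \<and> admissible n xs}"
    by (auto simp: adm_words_def admissible_def)
  then show ?thesis
    using False by (simp add: T1_def adm_sum_def word_weight_eq_prod)
qed

lemma adm_sum_top: "adm_sum n Q n m w = (if m = 0 then 1 else 0)"
proof -
  have "adm_words n n m = (if m = 0 then {[]} else {})"
    by (auto simp: adm_words_def admissible_def)
  then show ?thesis
    by (simp add: adm_sum_def)
qed

lemma adm_sum_neg: "m < 0 \<Longrightarrow> adm_sum n Q r m w = 0"
  by (simp add: adm_sum_def adm_words_def)

lemma strict_sorted_obtain_Cons_Min: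
  fixes xs :: "'a::linorder list"
  assumes "sorted_wrt (<) xs" "a \<in> set xs" "\<forall>x\<in>set xs. a \<le> x"
  obtains ys where "xs = a # ys"
  using assms by (cases xs) force+

lemma strict_sorted_obtain_snoc_Max:
  fixes xs :: "'a::linorder list"
  assumes "sorted_wrt (<) xs" "b \<in> set xs" "\<forall>x\<in>set xs. x \<le> b"
  obtains ys where "xs = ys @ [b]"
  using assms by (cases xs rule: rev_cases) (force simp: sorted_wrt_append)+

lemma letters_strip_outer_iff:
  fixes xs :: "nat list"
  shows "set xs \<subseteq> {r + 1..2 * n - r} \<and> r + 1 \<notin> set xs \<and> 2 * n - r \<notin> set xs
    \<longleftrightarrow> set xs \<subseteq> {r + 1 + 1..2 * n - (r + 1)}"
proof -
  have "x \<in> {r + 1..2 * n - r} \<and> x \<noteq> r + 1 \<and> x \<noteq> 2 * n - r \<longleftrightarrow> x \<in> {r + 1 + 1..2 * n - (r + 1)}"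
    for x :: nat
    by auto
  then show ?thesis
    by blast
qed

lemma adm_words_avoiding:
  "{xs \<in> adm_words n r m. r + 1 \<notin> set xs \<and> 2 * n - r \<notin> set xs} = adm_words n (r + 1) m"
  using letters_strip_outer_iff[of _ r n] by (auto simp: adm_words_def)

lemma adm_words_first_only:
  assumes "r < n"
  shows "{xs \<in> adm_words n r m. r + 1 \<in> set xs \<and> 2 * n - r \<notin> set xs}
    = (#) (r + 1) ` adm_words n (r + 1) (m - 1)"
proof (intro equalityI subsetI)
  fix xs assume xs: "xs \<in> {xs \<in> adm_words n r m. r + 1 \<in> set xs \<and> 2 * n - r \<notin> set xs}"
  then have "sorted_wrt (<) xs" "r + 1 \<in> set xs" "\<forall>x\<in>set xs. r + 1 \<le> x"
    by (auto simp: adm_words_def admissible_def)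
  then obtain ys where xs_eq: "xs = (r + 1) # ys"
    by (rule strict_sorted_obtain_Cons_Min)
  have "set ys \<subseteq> {r + 1 + 1..2 * n - (r + 1)}"
    using xs letters_strip_outer_iff[of ys r n] unfolding xs_eq
    by (auto simp: adm_words_def admissible_def)
  then show "xs \<in> (#) (r + 1) ` adm_words n (r + 1) (m - 1)"
    using xs admissible_Cons_iff[of "r + 1" n ys] assms unfolding xs_eq
    by (auto simp: adm_words_def)
next
  fix xs assume "xs \<in> (#) (r + 1) ` adm_words n (r + 1) (m - 1)"
  then obtain ys where "xs = (r + 1) # ys" "ys \<in> adm_words n (r + 1) (m - 1)"
    by blast
  then show "xs \<in> {xs \<in> adm_words n r m. r + 1 \<in> set xs \<and> 2 * n - r \<notin> set xs}"
    using assms admissible_Cons_iff[of "r + 1" n ys] letters_strip_outer_iff[of ys r n]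
    by (auto simp: adm_words_def)
qed

lemma adm_words_last_only:
  assumes "r < n"
  shows "{xs \<in> adm_words n r m. r + 1 \<notin> set xs \<and> 2 * n - r \<in> set xs}
    = (\<lambda>ys. ys @ [2 * n - r]) ` adm_words n (r + 1) (m - 1)"
proof (intro equalityI subsetI)
  fix xs assume xs: "xs \<in> {xs \<in> adm_words n r m. r + 1 \<notin> set xs \<and> 2 * n - r \<in> set xs}"
  then have "sorted_wrt (<) xs" "2 * n - r \<in> set xs" "\<forall>x\<in>set xs. x \<le> 2 * n - r"
    by (auto simp: adm_words_def admissible_def)
  then obtain ys where xs_eq: "xs = ys @ [2 * n - r]"
    by (rule strict_sorted_obtain_snoc_Max)
  have "set ys \<subseteq> {r + 1 + 1..2 * n - (r + 1)}"
    using xs letters_strip_outer_iff[of ys r n] unfolding xs_eq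
    by (auto simp: adm_words_def admissible_def sorted_wrt_append)
  then show "xs \<in> (\<lambda>ys. ys @ [2 * n - r]) ` adm_words n (r + 1) (m - 1)"
    using xs admissible_snoc_iff[of "r + 1" n ys] assms unfolding xs_eq
    by (auto simp: adm_words_def)
next
  fix xs assume "xs \<in> (\<lambda>ys. ys @ [2 * n - r]) ` adm_words n (r + 1) (m - 1)"
  then obtain ys where "xs = ys @ [2 * n - r]" "ys \<in> adm_words n (r + 1) (m - 1)"
    by blast
  then show "xs \<in> {xs \<in> adm_words n r m. r + 1 \<notin> set xs \<and> 2 * n - r \<in> set xs}"
    using assms admissible_snoc_iff[of "r + 1" n ys] letters_strip_outer_iff[of ys r n]
    by (auto simp: adm_words_def)
qed

lemma adm_words_first_last:
  assumes "r < n"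
  shows "{xs \<in> adm_words n r m. r + 1 \<in> set xs \<and> 2 * n - r \<in> set xs}
    = (\<lambda>ys. (r + 1) # ys @ [2 * n - r]) ` {ys \<in> adm_words n (r + 1) (m - 2). m \<le> int (n - r)}"
proof (intro equalityI subsetI)
  fix xs assume xs: "xs \<in> {xs \<in> adm_words n r m. r + 1 \<in> set xs \<and> 2 * n - r \<in> set xs}"
  then have "sorted_wrt (<) xs" "r + 1 \<in> set xs" "\<forall>x\<in>set xs. r + 1 \<le> x"
    by (auto simp: adm_words_def admissible_def)
  then obtain zs where xs_eq: "xs = (r + 1) # zs"
    by (rule strict_sorted_obtain_Cons_Min)
  have "sorted_wrt (<) zs" "2 * n - r \<in> set zs" "\<forall>x\<in>set zs. x \<le> 2 * n - r"
    using xs assms unfolding xs_eq by (auto simp: adm_words_def admissible_def)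
  then obtain ys where zs_eq: "zs = ys @ [2 * n - r]"
    by (rule strict_sorted_obtain_snoc_Max)
  have "set ys \<subseteq> {r + 1 + 1..2 * n - (r + 1)}"
    using xs letters_strip_outer_iff[of ys r n] unfolding xs_eq zs_eq
    by (auto simp: adm_words_def admissible_def sorted_wrt_append)
  then show "xs \<in> (\<lambda>ys. (r + 1) # ys @ [2 * n - r])
      ` {ys \<in> adm_words n (r + 1) (m - 2). m \<le> int (n - r)}"
    using xs admissible_Cons_snoc_iff[of "r + 1" n ys] assms unfolding xs_eq zs_eq
    by (auto simp: adm_words_def)
next
  fix xs assume "xs \<in> (\<lambda>ys. (r + 1) # ys @ [2 * n - r])
      ` {ys \<in> adm_words n (r + 1) (m - 2). m \<le> int (n - r)}"
  then obtain ys
    where "xs = (r + 1) # ys @ [2 * n - r]" "ys \<in> adm_words n (r + 1) (m - 2)" "m \<le> int (n - r)"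
    by blast
  then show "xs \<in> {xs \<in> adm_words n r m. r + 1 \<in> set xs \<and> 2 * n - r \<in> set xs}"
    using assms admissible_Cons_snoc_iff[of "r + 1" n ys] letters_strip_outer_iff[of ys r n]
    by (auto simp: adm_words_def)
qed

lemma adm_words_eq_empty:
  assumes "r \<le> n" "m > int (n - r)"
  shows "adm_words n r m = {}"
  using assms
proof (induction "n - r" arbitrary: r m)
  case 0
  then show ?case
    by (auto simp: adm_words_def)
next
  case (Suc j)
  then have "r < n"
    by simp
  have inner_empty: "adm_words n (Suc r) m' = {}" if "m' \<ge> m - 1" for m'
    using Suc that by (intro Suc.hyps) auto
  have "adm_words n r m =
      {xs \<in> adm_words n r m. r + 1 \<notin> set xs \<and> 2 * n - r \<notin> set xs}
    \<union> {xs \<in> adm_words n r m. r + 1 \<in> set xs \<and> 2 * n - r \<notin> set xs}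
    \<union> {xs \<in> adm_words n r m. r + 1 \<notin> set xs \<and> 2 * n - r \<in> set xs}
    \<union> {xs \<in> adm_words n r m. r + 1 \<in> set xs \<and> 2 * n - r \<in> set xs}"
    by blast
  also have "\<dots> = {}"
    unfolding adm_words_avoiding adm_words_first_only[OF \<open>r < n\<close>] adm_words_last_only[OF \<open>r < n\<close>]
      adm_words_first_last[OF \<open>r < n\<close>]
    using Suc.prems by (simp add: inner_empty)
  finally show ?case .
qed

lemma adm_sum_eq_0:
  assumes "r \<le> n" "m > int (n - r)"
  shows "adm_sum n Q r m w = 0"
  using adm_words_eq_empty[OF assms] by (simp add: adm_sum_def)

lemma sum_adm_words_first_only:
  assumes "r < n"
  shows "(\<Sum>xs\<in>{xs \<in> adm_words n r m. r + 1 \<in> set xs \<and> 2 * n - r \<notin> set xs}. word_weight n Q xs w)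
    = zp n Q (r + 1) (w - 1) * adm_sum n Q (r + 1) (m - 1) (w - 1)"
  unfolding adm_words_first_only[OF assms] adm_sum_def
  by (simp add: sum.reindex sum_distrib_left zJ_outer[OF assms, simplified])

lemma sum_adm_words_last_only:
  assumes "r < n"
  shows "(\<Sum>xs\<in>{xs \<in> adm_words n r m. r + 1 \<notin> set xs \<and> 2 * n - r \<in> set xs}. word_weight n Q xs w)
    = adm_sum n Q (r + 1) (m - 1) w * zb n Q (r + 1) (w - of_int m)"
proof -
  have "word_weight n Q (ys @ [2 * n - r]) w = word_weight n Q ys w * zb n Q (r + 1) (w - of_int m)"
    if "ys \<in> adm_words n (r + 1) (m - 1)" for ys
  proof -
    have "m = int (length ys) + 1"
      using that by (simp add: adm_words_def)
    then have shift: "w - of_nat (length ys + 1) = w - of_int m"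
      by simp
    show ?thesis
      by (simp only: word_weight_snoc shift zJ_outer[OF assms])
  qed
  then show ?thesis
    unfolding adm_words_last_only[OF assms] adm_sum_def
    by (simp add: sum.reindex inj_on_def sum_distrib_right)
qed

lemma sum_adm_words_first_last:
  assumes "r < n"
  shows "(\<Sum>xs\<in>{xs \<in> adm_words n r m. r + 1 \<in> set xs \<and> 2 * n - r \<in> set xs}. word_weight n Q xs w)
    = (if m \<le> int (n - r)
       then zp n Q (r + 1) (w - 1) * adm_sum n Q (r + 1) (m - 2) (w - 1)
            * zb n Q (r + 1) (w - of_int m)
       else 0)"
proof -
  have "word_weight n Q ((r + 1) # ys @ [2 * n - r]) w
      = zp n Q (r + 1) (w - 1) * word_weight n Q ys (w - 1) * zb n Q (r + 1) (w - of_int m)"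
    if "ys \<in> adm_words n (r + 1) (m - 2)" for ys
  proof -
    have "m = int (length ys) + 2"
      using that by (simp add: adm_words_def)
    then have shift: "w - 1 - of_nat (length ys + 1) = w - of_int m"
      by simp
    show ?thesis
      by (simp only: word_weight.simps(2) word_weight_snoc shift zJ_outer[OF assms] mult.assoc)
  qed
  then show ?thesis
    unfolding adm_words_first_last[OF assms] adm_sum_def
    by (simp add: sum.reindex inj_on_def sum_distrib_left sum_distrib_right mult.assoc)
qed

lemma adm_sum_rec:
  assumes "r < n"
  shows "adm_sum n Q r m w = adm_sum n Q (r + 1) m w
    + zp n Q (r + 1) (w - 1) * adm_sum n Q (r + 1) (m - 1) (w - 1)
    + adm_sum n Q (r + 1) (m - 1) w * zb n Q (r + 1) (w - of_int m)
    + (if m \<le> int (n - r)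
       then zp n Q (r + 1) (w - 1) * adm_sum n Q (r + 1) (m - 2) (w - 1)
            * zb n Q (r + 1) (w - of_int m)
       else 0)"
proof -
  let ?W = "\<lambda>xs. word_weight n Q xs w"
  let ?part = "\<lambda>P. (\<Sum>xs\<in>{xs \<in> adm_words n r m. P (r + 1 \<in> set xs) (2 * n - r \<in> set xs)}. ?W xs)"
  have "adm_sum n Q r m w = (\<Sum>xs\<in>adm_words n r m.
        (if r + 1 \<notin> set xs \<and> 2 * n - r \<notin> set xs then ?W xs else 0)
      + (if r + 1 \<in> set xs \<and> 2 * n - r \<notin> set xs then ?W xs else 0)
      + (if r + 1 \<notin> set xs \<and> 2 * n - r \<in> set xs then ?W xs else 0)
      + (if r + 1 \<in> set xs \<and> 2 * n - r \<in> set xs then ?W xs else 0))"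
    unfolding adm_sum_def by (intro sum.cong) auto
  also have "\<dots> = ?part (\<lambda>p q. \<not> p \<and> \<not> q) + ?part (\<lambda>p q. p \<and> \<not> q)
      + ?part (\<lambda>p q. \<not> p \<and> q) + ?part (\<lambda>p q. p \<and> q)"
    by (simp add: sum.distrib sum.inter_filter[OF finite_adm_words])
  also have "?part (\<lambda>p q. \<not> p \<and> \<not> q) = adm_sum n Q (r + 1) m w"
    unfolding adm_words_avoiding adm_sum_def ..
  finally show ?thesis
    by (simp only: sum_adm_words_first_only[OF assms] sum_adm_words_last_only[OF assms]
        sum_adm_words_first_last[OF assms])
qed

definition adjoin ::
    "nat \<Rightarrow> (nat \<Rightarrow> complex \<Rightarrow> 'k::field) \<Rightarrow> nat \<Rightarrow> (int \<Rightarrow> complex \<Rightarrow> 'k) \<Rightarrow> int \<Rightarrow> complex \<Rightarrow> 'k"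
  where
  "adjoin n Q a F m w =
     zp n Q a (w - 1) * F (m - 2) (w - 1) * zb n Q a (w - of_int m)
     + zp n Q a (w - 1) * F (m - 1) (w - 1) + F (m - 1) w * zb n Q a (w - of_int m) + F m w"

lemma adm_sum_eq_adjoin:
  assumes "r < n" "m \<le> int (n - r)"
  shows "adm_sum n Q r m w = adjoin n Q (r + 1) (adm_sum n Q (r + 1)) m w"
  by (subst adm_sum_rec[OF assms(1)]) (simp add: assms(2) adjoin_def algebra_simps)

section \<open>Extended sums\<close>

text \<open>For the letters \<open>r + 1, \<dots>, (r + 1)\<^bsub>bar\<^esub>\<close> the rank is \<open>n - r\<close>, and this is the analogue
  of the extension \<open>T\<^sup>(\<^sup>a\<^sup>)\<^sub>1 = - T\<^sup>(\<^sup>N\<^sup>-\<^sup>a\<^sup>)\<^sub>1\<close> with \<open>N\<close> replaced by \<open>2 (n - r) + 2\<close>;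
  the \<open>Ysh\<close> factor is \<open>1\<close> for \<open>r = 0\<close>.\<close>
definition ext_sum :: "nat \<Rightarrow> (nat \<Rightarrow> complex \<Rightarrow> 'k::field) \<Rightarrow> nat \<Rightarrow> int \<Rightarrow> complex \<Rightarrow> 'k" where
  "ext_sum n Q r m w =
    (if m \<le> int (n - r) + 1 then adm_sum n Q r m w
     else - (Ysh n Q r (w + of_int (int (n - r) + 1 - m)) / Ysh n Q r w)
          * adm_sum n Q r (2 * int (n - r) + 2 - m) (w + of_int (int (n - r) + 1 - m)))"

lemma ext_sum_low: "m \<le> int (n - r) + 1 \<Longrightarrow> ext_sum n Q r m w = adm_sum n Q r m w"
  by (simp add: ext_sum_def)

lemma ext_sum_high:
  assumes "r \<le> n" "m \<ge> int (n - r) + 1"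
    and "v = w + of_int (int (n - r) + 1 - m)" "p = 2 * int (n - r) + 2 - m"
  shows "ext_sum n Q r m w = - (Ysh n Q r v / Ysh n Q r w) * adm_sum n Q r p v"
proof (cases "m = int (n - r) + 1")
  case True
  then have "p = int (n - r) + 1"
    using assms by simp
  then have "adm_sum n Q r p v = 0"
    using assms(1) by (simp add: adm_sum_eq_0)
  then show ?thesis
    using True by (simp add: ext_sum_def adm_sum_eq_0 assms(1))
qed (use assms in \<open>simp add: ext_sum_def\<close>)

lemma ext_sum_rec_low:
  assumes "r < n" "m \<le> int (n - r)"
  shows "ext_sum n Q r m w = adjoin n Q (r + 1) (ext_sum n Q (r + 1)) m w"
proof -
  have "ext_sum n Q (r + 1) j x = adm_sum n Q (r + 1) j x" if "j \<le> m" for j x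
    using assms that by (intro ext_sum_low) simp
  then show ?thesis
    using assms by (simp add: ext_sum_low adm_sum_eq_adjoin adjoin_def)
qed

lemma ext_sum_rec_mid:
  assumes Q_nonzero: "\<And>a v. 1 \<le> a \<Longrightarrow> a \<le> n \<Longrightarrow> Q a v \<noteq> 0"
    and "r < n" "m = int (n - r) + 1"
  shows "ext_sum n Q r m w = adjoin n Q (r + 1) (ext_sum n Q (r + 1)) m w"
proof -
  define K where "K = int (n - r)"
  have K': "int (n - (r + 1)) = K - 1"
    using assms(2) by (simp add: K_def)
  have lhs: "ext_sum n Q r m w = 0"
    using assms by (simp add: ext_sum_low adm_sum_eq_0)
  have E2: "ext_sum n Q (r + 1) (m - 2) (w - 1) = adm_sum n Q (r + 1) (K - 1) (w - 1)"
    using assms K' by (simp add: ext_sum_low K_def)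
  have E1: "ext_sum n Q (r + 1) (m - 1) x = 0" for x
    using assms K' by (simp add: ext_sum_low adm_sum_eq_0 K_def)
  have E0: "ext_sum n Q (r + 1) m w
      = - (Ysh n Q (r + 1) (w - 1) / Ysh n Q (r + 1) w) * adm_sum n Q (r + 1) (K - 1) (w - 1)"
    using assms K' by (intro ext_sum_high) (simp_all add: K_def)
  have zb: "zb n Q (r + 1) (w - of_int m) = Ysh n Q r w / Ysh n Q (r + 1) w"
    using zp_zb_eq_Ysh(2)[OF assms(2), of Q "w - of_int m"] assms by simp
  have "Ysh n Q r w \<noteq> 0" "Ysh n Q (r + 1) w \<noteq> 0"
    using Q_nonzero assms(2) by (simp_all add: Ysh_nonzero)
  then show ?thesis
    unfolding lhs adjoin_def E2 E1 E0 zb zp_zb_eq_Ysh(1)[OF assms(2)] by (simp add: field_simps)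
qed

lemma ext_sum_rec_high:
  assumes Q_nonzero: "\<And>a v. 1 \<le> a \<Longrightarrow> a \<le> n \<Longrightarrow> Q a v \<noteq> 0"
    and "r < n" "m \<ge> int (n - r) + 2"
  shows "ext_sum n Q r m w = adjoin n Q (r + 1) (ext_sum n Q (r + 1)) m w"
proof -
  define K where "K = int (n - r)"
  define v where "v = w + of_int (K + 1 - m)"
  define p where "p = 2 * K + 2 - m"
  have K': "int (n - (r + 1)) = K - 1"
    using assms(2) by (simp add: K_def)
  have "ext_sum n Q r m w = - (Ysh n Q r v / Ysh n Q r w) * adm_sum n Q r p v"
    using assms by (intro ext_sum_high) (simp_all add: K_def v_def p_def)
  also have "adm_sum n Q r p v = adjoin n Q (r + 1) (adm_sum n Q (r + 1)) p v"
    using assms by (intro adm_sum_eq_adjoin) (simp_all add: K_def p_def)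
  finally have lhs: "ext_sum n Q r m w
      = - (Ysh n Q r v / Ysh n Q r w) * adjoin n Q (r + 1) (adm_sum n Q (r + 1)) p v" .
  have E2: "ext_sum n Q (r + 1) (m - 2) (w - 1)
      = - (Ysh n Q (r + 1) v / Ysh n Q (r + 1) (w - 1)) * adm_sum n Q (r + 1) p v"
    and E1: "ext_sum n Q (r + 1) (m - 1) (w - 1)
      = - (Ysh n Q (r + 1) (v - 1) / Ysh n Q (r + 1) (w - 1)) * adm_sum n Q (r + 1) (p - 1) (v - 1)"
    and E1': "ext_sum n Q (r + 1) (m - 1) w
      = - (Ysh n Q (r + 1) v / Ysh n Q (r + 1) w) * adm_sum n Q (r + 1) (p - 1) v"
    and E0: "ext_sum n Q (r + 1) m w
      = - (Ysh n Q (r + 1) (v - 1) / Ysh n Q (r + 1) w) * adm_sum n Q (r + 1) (p - 2) (v - 1)"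
    using assms K' by (intro ext_sum_high; simp add: K_def v_def p_def algebra_simps)+
  have zb: "zb n Q (r + 1) (v - of_int p) = Ysh n Q r w / Ysh n Q (r + 1) w"
    "zb n Q (r + 1) (w - of_int m) = Ysh n Q r v / Ysh n Q (r + 1) v"
    using zp_zb_eq_Ysh(2)[OF assms(2), of Q "v - of_int p"]
      zp_zb_eq_Ysh(2)[OF assms(2), of Q "w - of_int m"]
    by (simp_all add: K_def v_def p_def algebra_simps)
  have "Ysh n Q r x \<noteq> 0" "Ysh n Q (r + 1) x \<noteq> 0" for x
    using Q_nonzero assms(2) by (simp_all add: Ysh_nonzero)
  then show ?thesis
    unfolding lhs adjoin_def E2 E1 E1' E0 zb zp_zb_eq_Ysh(1)[OF assms(2)] by (simp add: field_simps)
qed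

lemma ext_sum_rec:
  assumes "\<And>a v. 1 \<le> a \<Longrightarrow> a \<le> n \<Longrightarrow> Q a v \<noteq> 0" and "r < n"
  shows "ext_sum n Q r m w = adjoin n Q (r + 1) (ext_sum n Q (r + 1)) m w"
proof -
  consider "m \<le> int (n - r)" | "m = int (n - r) + 1" | "m \<ge> int (n - r) + 2"
    by linarith
  then show ?thesis
  proof cases
    case 1
    show ?thesis
      using ext_sum_rec_low[OF assms(2) 1] .
  next
    case 2
    show ?thesis
      using ext_sum_rec_mid[OF assms 2] .
  next
    case 3
    show ?thesis
      using ext_sum_rec_high[OF assms 3] .
  qed
qed

section \<open>The coefficients of the operator\<close>

definition Lfactor :: "nat \<Rightarrow> (nat \<Rightarrow> complex \<Rightarrow> 'k::field) \<Rightarrow> nat \<Rightarrow> 'k dop" where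
  "Lfactor n Q i = dop_lin (\<lambda>v. xN n Q i (v + of_int (int n + 1 - int i)))"

definition inner_op :: "nat \<Rightarrow> (nat \<Rightarrow> complex \<Rightarrow> 'k::field) \<Rightarrow> nat \<Rightarrow> 'k dop" where
  "inner_op n Q r = foldr dop_mult (map (Lfactor n Q) [r + 1..<2 * n + 3 - r]) dop_one"

lemma Lop_eq_inner_op: "Lop n Q = inner_op n Q 0"
  by (simp add: Lop_def inner_op_def Lfactor_def[abs_def])

lemma upt_split_ends:
  assumes "r \<le> n"
  shows "[r + 1..<2 * n + 3 - r] = (r + 1) # [r + 1 + 1..<2 * n + 3 - (r + 1)] @ [2 * n + 2 - r]"
proof -
  have lt: "r + 1 < 2 * n + 2 - r"
    using assms by simp
  have "2 * n + 3 - r = Suc (2 * n + 2 - r)"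
    using assms by simp
  then have "[r + 1..<2 * n + 3 - r] = [r + 1..<2 * n + 2 - r] @ [2 * n + 2 - r]"
    using lt by (simp only: upt_Suc_append less_imp_le)
  also have "[r + 1..<2 * n + 2 - r] = (r + 1) # [r + 1 + 1..<2 * n + 2 - r]"
    using upt_conv_Cons[OF lt] by simp
  finally show ?thesis
    by simp
qed

lemma inner_op_step:
  assumes "r \<le> n"
  shows "inner_op n Q r
    = dop_mult (Lfactor n Q (r + 1))
        (dop_mult (inner_op n Q (r + 1)) (Lfactor n Q (2 * n + 2 - r)))"
  unfolding inner_op_def upt_split_ends[OF assms]
  by (simp add: foldr_dop_mult[of _ "Lfactor n Q (Suc (Suc (2 * n)) - r)"] del: upt_Suc)

lemma Lfactor_outer:
  assumes "r < n"
  shows "Lfactor n Q (r + 1) = dop_lin (\<lambda>v. zp n Q (r + 1) (v + of_int (int (n - r))))"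
    and "Lfactor n Q (2 * n + 2 - r) = dop_lin (\<lambda>v. zb n Q (r + 1) (v - of_int (int (n - r) + 1)))"
proof -
  have "int n + 1 - int (r + 1) = int (n - r)"
    using assms by simp
  then show "Lfactor n Q (r + 1) = dop_lin (\<lambda>v. zp n Q (r + 1) (v + of_int (int (n - r))))"
    using assms by (simp add: Lfactor_def xN_def)
  have "\<not> 2 * n + 2 - r \<le> n" "2 * n + 2 - r \<noteq> n + 1" "2 * n + 2 - r \<noteq> n + 2"
    and "2 * n + 3 - (2 * n + 2 - r) = r + 1"
    using assms by auto
  then have letter: "xN n Q (2 * n + 2 - r) = zb n Q (r + 1)"
    unfolding xN_def by (simp only: if_False)
  have shift:
    "v + of_int (int n + 1 - int (2 * n + 2 - r)) = v - (of_int (int (n - r) + 1) :: complex)" for v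
    using assms by (simp add: of_nat_diff)
  show "Lfactor n Q (2 * n + 2 - r) = dop_lin (\<lambda>v. zb n Q (r + 1) (v - of_int (int (n - r) + 1)))"
    unfolding Lfactor_def letter shift ..
qed

lemma Lfactor_middle:
  shows "Lfactor n Q (n + 1) = dop_lin (Xmid n Q)"
    and "Lfactor n Q (n + 2) = dop_lin (\<lambda>v. - Xmid n Q (v - 1))"
  by (simp_all add: Lfactor_def xN_def)

lemma inner_op_centre: "inner_op n Q (n + 1) = dop_one"
  by (simp add: inner_op_def)

lemma inner_op_coeff_centre:
  fixes Q :: "nat \<Rightarrow> complex \<Rightarrow> 'k::field"
  assumes "\<And>a v. 1 \<le> a \<Longrightarrow> a \<le> n \<Longrightarrow> Q a v \<noteq> 0" and "1 \<le> n"
  shows "dop_coeff (inner_op n Q n) i u = (-1) powi i * ext_sum n Q n (2 - i) (u + 1)"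
proof -
  let ?X = "Xmid n Q"
  have "inner_op n Q n = dop_mult (dop_lin ?X) (dop_lin (\<lambda>v. - ?X (v - 1)))"
    using inner_op_step[of n n Q]
    by (simp add: inner_op_centre[simplified] Lfactor_middle[simplified])
  then have coeff: "dop_coeff (inner_op n Q n) i u
      = ?X u * dop_coeff (dop_lin (\<lambda>v. - ?X (v - 1))) i u
        - dop_coeff (dop_lin (\<lambda>v. - ?X (v - 1))) (i - 1) (u + 1)"
    by (simp only: dop_coeff_lin_mult)
  have ext: "ext_sum n Q n m w
      = (if m = 0 then 1 else if m = 2 then - (Ysh n Q n (w - 1) / Ysh n Q n w) else 0)" for m w
    by (simp add: ext_sum_def adm_sum_top)
  consider "i < 0" | "i = 0" | "i = 1" | "i = 2" | "i > 2"
    by linarith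
  then show ?thesis
    unfolding coeff
    by cases
      (simp_all add: dop_coeff_lin ext Xmid_mult_shift[OF assms, where u = u] power_int_minus_left)
qed

lemma inner_op_coeff_step:
  fixes Q :: "nat \<Rightarrow> complex \<Rightarrow> 'k::field"
  assumes Q_nonzero: "\<And>a v. 1 \<le> a \<Longrightarrow> a \<le> n \<Longrightarrow> Q a v \<noteq> 0" and "r < n"
    and IH: "\<And>j x. dop_coeff (inner_op n Q (r + 1)) j x
      = (-1) powi j * ext_sum n Q (r + 1) (2 * int (n - r) - j) (x + of_int (int (n - r)))"
  shows "dop_coeff (inner_op n Q r) i u
    = (-1) powi i * ext_sum n Q r (2 * int (n - r) + 2 - i) (u + of_int (int (n - r) + 1))"
proof -
  define K where "K = int (n - r)"
  define w where "w = u + of_int (K + 1)"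
  define m where "m = 2 * K + 2 - i"
  let ?C = "\<lambda>j x. dop_coeff (inner_op n Q (r + 1)) j x" and ?E = "ext_sum n Q (r + 1)"
  have "dop_coeff (inner_op n Q r) i u
      = zp n Q (r + 1) (u + of_int K)
          * (?C i u * zb n Q (r + 1) (u + of_int i - of_int (K + 1)) - ?C (i - 1) u)
        - (?C (i - 1) (u + 1) * zb n Q (r + 1) (u + 1 + of_int (i - 1) - of_int (K + 1))
           - ?C (i - 1 - 1) (u + 1))"
    unfolding inner_op_step[OF less_imp_le[OF assms(2)]] Lfactor_outer[OF assms(2)] K_def
    by (simp only: dop_coeff_lin_mult dop_coeff_mult_lin)
  also have "u + of_int K = w - 1"
    by (simp add: w_def)
  also have "u + of_int i - of_int (K + 1) = w - of_int m"
    by (simp add: w_def m_def)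
  also have "u + 1 + of_int (i - 1) - of_int (K + 1) = w - of_int m"
    by (simp add: w_def m_def)
  also have "?C i u = (-1) powi i * ?E (m - 2) (w - 1)"
    unfolding IH by (simp add: K_def w_def m_def)
  also have "?C (i - 1) u = - ((-1) powi i * ?E (m - 1) (w - 1))"
    unfolding IH by (simp add: K_def w_def m_def minus_one_powi_diff algebra_simps)
  also have "?C (i - 1) (u + 1) = - ((-1) powi i * ?E (m - 1) w)"
    unfolding IH by (simp add: K_def w_def m_def minus_one_powi_diff algebra_simps)
  also have "?C (i - 1 - 1) (u + 1) = (-1) powi i * ?E m w"
    unfolding IH by (simp add: K_def w_def m_def minus_one_powi_diff[simplified] algebra_simps)
  also have "zp n Q (r + 1) (w - 1)
        * ((-1) powi i * ?E (m - 2) (w - 1) * zb n Q (r + 1) (w - of_int m)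
           - - ((-1) powi i * ?E (m - 1) (w - 1)))
      - (- ((-1) powi i * ?E (m - 1) w) * zb n Q (r + 1) (w - of_int m) - (-1) powi i * ?E m w)
      = (-1) powi i * adjoin n Q (r + 1) ?E m w"
    by (simp add: adjoin_def algebra_simps)
  also have "adjoin n Q (r + 1) ?E m w = ext_sum n Q r m w"
    using ext_sum_rec[OF Q_nonzero assms(2)] by simp
  finally show ?thesis
    by (simp add: K_def w_def m_def)
qed

lemma inner_op_coeff:
  fixes Q :: "nat \<Rightarrow> complex \<Rightarrow> 'k::field"
  assumes "\<And>a v. 1 \<le> a \<Longrightarrow> a \<le> n \<Longrightarrow> Q a v \<noteq> 0" and "1 \<le> n" and "r \<le> n"
  shows "dop_coeff (inner_op n Q r) i u
    = (-1) powi i * ext_sum n Q r (2 * int (n - r) + 2 - i) (u + of_int (int (n - r) + 1))"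
  using assms(3)
proof (induction "n - r" arbitrary: r i u)
  case 0
  then show ?case
    using inner_op_coeff_centre[OF assms(1,2)] by simp
next
  case (Suc j)
  then have "r < n" "j = n - (r + 1)"
    by simp_all
  moreover have "int (n - (r + 1)) = int (n - r) - 1"
    using \<open>r < n\<close> by simp
  ultimately show ?case
    using Suc.hyps(1)[of "r + 1"]
    by (intro inner_op_coeff_step[OF assms(1)]) (simp_all add: algebra_simps)
qed

lemma Lop_eq_ext_sum:
  fixes Q :: "nat \<Rightarrow> complex \<Rightarrow> 'k::field"
  assumes "\<And>a v. 1 \<le> a \<Longrightarrow> a \<le> n \<Longrightarrow> Q a v \<noteq> 0" and "1 \<le> n"
  shows "Lop n Q k u = (-1) ^ k * ext_sum n Q 0 (2 * int n + 2 - int k) (u + of_nat n + 1)"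
proof -
  have "Lop n Q k u = dop_coeff (inner_op n Q 0) (int k) u"
    by (simp add: Lop_eq_inner_op dop_coeff_def)
  then show ?thesis
    using inner_op_coeff[OF assms, where r = 0 and i = "int k" and u = u] by (simp add: add.assoc)
qed

lemma ext_sum_0_eq_T1:
  "ext_sum n Q 0 (2 * int n + 2 - int k) (u + of_nat n + 1) =
    (if k \<le> n then - T1 n Q k (u + of_nat k / 2)
     else if n + 2 \<le> k \<and> k \<le> 2 * n + 2 then T1 n Q (2 * n + 2 - k) (u + of_nat k / 2)
     else 0)"
proof -
  define m where "m = 2 * int n + 2 - int k"
  consider "k \<le> n" | "k = n + 1" | "n + 2 \<le> k \<and> k \<le> 2 * n + 2" | "k > 2 * n + 2"
    by linarith
  then have "ext_sum n Q 0 m (u + of_nat n + 1) =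
    (if k \<le> n then - T1 n Q k (u + of_nat k / 2)
     else if n + 2 \<le> k \<and> k \<le> 2 * n + 2 then T1 n Q (2 * n + 2 - k) (u + of_nat k / 2)
     else 0)"
  proof cases
    case 1
    have "ext_sum n Q 0 m (u + of_nat n + 1) = - adm_sum n Q 0 (int k) (u + of_nat k)"
      using 1 by (subst ext_sum_high) (simp_all add: m_def)
    moreover have "T1 n Q k (u + of_nat k / 2) = adm_sum n Q 0 (int k) (u + of_nat k)"
      unfolding T1_eq_adm_sum by (simp add: add.assoc)
    ultimately show ?thesis
      using 1 by simp
  next
    case 2
    then show ?thesis
      by (simp add: ext_sum_low adm_sum_eq_0 m_def)
  next
    case 3
    then have "m = int (2 * n + 2 - k)"
      and "u + of_nat k / 2 + of_nat (2 * n + 2 - k) / 2 = u + of_nat n + 1"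
      by (simp_all add: m_def of_nat_diff field_simps)
    then have "T1 n Q (2 * n + 2 - k) (u + of_nat k / 2) = adm_sum n Q 0 m (u + of_nat n + 1)"
      by (simp only: T1_eq_adm_sum)
    moreover have "ext_sum n Q 0 m (u + of_nat n + 1) = adm_sum n Q 0 m (u + of_nat n + 1)"
      using 3 by (intro ext_sum_low) (simp add: m_def)
    ultimately show ?thesis
      using 3 by simp
  next
    case 4
    then show ?thesis
      by (simp add: ext_sum_low adm_sum_neg m_def)
  qed
  then show ?thesis
    by (simp only: m_def)
qed

theorem mainTheorem4:
  fixes n :: nat and Q :: "nat \<Rightarrow> complex \<Rightarrow> 'k::field" and k :: nat and u :: complex
  assumes "n \<ge> 2"
    and "\<And>a v. 1 \<le> a \<Longrightarrow> a \<le> n \<Longrightarrow> Q a v \<noteq> 0"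
  shows "Lop n Q k u =
    (if k \<le> n then - ((-1) ^ k * T1 n Q k (u + of_nat k / 2))
     else if n + 2 \<le> k \<and> k \<le> 2 * n + 2 then (-1) ^ k * T1 n Q (2 * n + 2 - k) (u + of_nat k / 2)
     else 0)"
proof -
  have "1 \<le> n"
    using assms(1) by simp
  then show ?thesis
    using Lop_eq_ext_sum[where n = n and Q = Q and k = k and u = u]
      ext_sum_0_eq_T1[where n = n and Q = Q and k = k and u = u] assms(2)
    by simp
qed

end
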